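(* Let $G$ be a finite, connected, undirected, unweighted graph without loops or multi-edges, with vertex set $V(G)$ of size $n \ge 2$. For distinct $v,u \in V(G)$ let $d(v,u)$ be the length (number of edges) of a shortest path between $v$ and $u$, let $\sigma(v,u) \ge 1$ be the number of distinct shortest paths between $v$ and $u$, and let $\Delta(G) = \max_{v,u \in V(G)} d(v,u)$ be the diameter of $G$. Define \[ ADPL(G) = \frac{1}{n(n-1)} \sum_{v \in V(G)} \sum_{u \in V(G)\setminus\{v\}} \frac{d(v,u)}{\sigma(v,u)}. \] Let $T \ge 1$ be an integer and let $v_1,\dots,v_T$ be vertices each chosen independently and uniformly at random from $V(G)$. For $1 \le t \le T$ set \[ \beta_t = \frac{1}{n-1} \sum_{u \in V(G)\setminus\{v_t\}} \frac{d(v_t,u)}{\sigma(v_t,u)}, \qquad \beta = \frac{1}{T}\sum_{t=1}^T \beta_t . \] Then for every $\epsilon > 0$, \[ \mathbf{P}\left[\,\left|ADPL(G) - \beta\right| > \epsilon\,\right] \le 2\exp\!\left(-2T\left(\frac{\epsilon}{\Delta(G)}\right)^2\right). \]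
   Context: The random variable $\beta$ is the output of the paper's sampling algorithm for estimating average discriminative path length: in each of $T$ iterations it picks a vertex uniformly at random (independently across iterations), computes distances and numbers of shortest paths from it to all other vertices, forms $\beta_t$, and finally outputs the average $\beta$. *)

theory Defs
  imports "HOL-Probability.Probability"
begin

text \<open>A finite simple graph is given by a vertex set V and a symmetric, irreflexive
edge relation E on V.\<close>

definition is_walk :: "'a set \<Rightarrow> ('a \<Rightarrow> 'a \<Rightarrow> bool) \<Rightarrow> 'a list \<Rightarrow> bool" where
  "is_walk V E xs \<longleftrightarrow> xs \<noteq> [] \<and> set xs \<subseteq> V \<and>
     (\<forall>i. Suc i < length xs \<longrightarrow> E (xs ! i) (xs ! Suc i))"

definition walks_len :: "'a set \<Rightarrow> ('a \<Rightarrow> 'a \<Rightarrow> bool) \<Rightarrow> 'a \<Rightarrow> 'a \<Rightarrow> nat \<Rightarrow> 'a list set" where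
  "walks_len V E v u k = {xs. is_walk V E xs \<and> hd xs = v \<and> last xs = u \<and> length xs = Suc k}"

definition graph_connected :: "'a set \<Rightarrow> ('a \<Rightarrow> 'a \<Rightarrow> bool) \<Rightarrow> bool" where
  "graph_connected V E \<longleftrightarrow> (\<forall>v\<in>V. \<forall>u\<in>V. \<exists>k. walks_len V E v u k \<noteq> {})"

definition gdist :: "'a set \<Rightarrow> ('a \<Rightarrow> 'a \<Rightarrow> bool) \<Rightarrow> 'a \<Rightarrow> 'a \<Rightarrow> nat" where
  "gdist V E v u = (LEAST k. walks_len V E v u k \<noteq> {})"

text \<open>sigma(v,u): number of shortest paths (walks of minimal length are exactly the
shortest paths; in a simple graph a path is determined by its vertex sequence).\<close>
definition nsp :: "'a set \<Rightarrow> ('a \<Rightarrow> 'a \<Rightarrow> bool) \<Rightarrow> 'a \<Rightarrow> 'a \<Rightarrow> nat" where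
  "nsp V E v u = card (walks_len V E v u (gdist V E v u))"

definition diameter :: "'a set \<Rightarrow> ('a \<Rightarrow> 'a \<Rightarrow> bool) \<Rightarrow> nat" where
  "diameter V E = Max {gdist V E v u | v u. v \<in> V \<and> u \<in> V}"

definition adpl :: "'a set \<Rightarrow> ('a \<Rightarrow> 'a \<Rightarrow> bool) \<Rightarrow> real" where
  "adpl V E = 1 / (real (card V) * (real (card V) - 1)) *
     (\<Sum>v\<in>V. \<Sum>u\<in>V - {v}. real (gdist V E v u) / real (nsp V E v u))"

definition beta_v :: "'a set \<Rightarrow> ('a \<Rightarrow> 'a \<Rightarrow> bool) \<Rightarrow> 'a \<Rightarrow> real" where
  "beta_v V E v = 1 / (real (card V) - 1) *
     (\<Sum>u\<in>V - {v}. real (gdist V E v u) / real (nsp V E v u))"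

end

theory Submission
  imports Defs
begin

text \<open>Each \<open>\<beta>\<^sub>t\<close> is an independent copy of \<open>\<beta>(v)\<close> for a uniform vertex \<open>v\<close>, whose
mean is \<open>ADPL(G)\<close>. Since \<open>d(v,u) \<le> \<Delta>(G)\<close> and \<open>\<sigma>(v,u) \<ge> 1\<close>, every \<open>\<beta>(v)\<close> lies in
\<open>[0, \<Delta>(G)]\<close>, so Hoeffding's inequality for the mean of \<open>T\<close> i.i.d. variables bounded
in an interval of length \<open>\<Delta>(G)\<close> gives the claim; connectivity and \<open>n \<ge> 2\<close> ensure
\<open>\<Delta>(G) \<ge> 1\<close>, so this interval is non-degenerate.\<close>

lemma Hoeffding_Pi_pmf_iid_abs_ge:
  fixes p :: "'a pmf" and f :: "'a \<Rightarrow> real" and I :: "'i set"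
  assumes "finite I" "I \<noteq> {}"
    and bounded: "\<And>x. x \<in> set_pmf p \<Longrightarrow> f x \<in> {a..b}" and "a < b" and "\<epsilon> \<ge> 0"
  shows "measure_pmf.prob (Pi_pmf I dflt (\<lambda>_. p))
           {g. \<bar>(\<Sum>i\<in>I. f (g i)) / real (card I) - measure_pmf.expectation p f\<bar> \<ge> \<epsilon>}
         \<le> 2 * exp (- 2 * real (card I) * \<epsilon>\<^sup>2 / (b - a)\<^sup>2)"
proof -
  define M where "M = Pi_pmf I dflt (\<lambda>_. p)"
  obtain i\<^sub>0 where "i\<^sub>0 \<in> I" using assms(2) by blast
  have component: "map_pmf (\<lambda>g. g i) M = p" if "i \<in> I" for i
    unfolding M_def using that assms(1) by (simp add: Pi_pmf_component)
  have distr_component: "distr (measure_pmf M) borel (\<lambda>g. f (g i)) = distr (measure_pmf p) borel f"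
    if "i \<in> I" for i
  proof -
    have "distr (measure_pmf M) borel (\<lambda>g. f (g i))
        = distr (measure_pmf (map_pmf (\<lambda>g. g i) M)) borel f"
      unfolding map_pmf_rep_eq by (subst distr_distr) (auto simp: o_def)
    then show ?thesis using component[OF that] by simp
  qed
  have "measure_pmf.expectation M (\<lambda>g. f (g i\<^sub>0))
      = measure_pmf.expectation (map_pmf (\<lambda>g. g i\<^sub>0) M) f"
    by simp
  then have mean: "measure_pmf.expectation M (\<lambda>g. f (g i\<^sub>0)) = measure_pmf.expectation p f"
    using component[OF \<open>i\<^sub>0 \<in> I\<close>] by simp
  interpret Hoeffding_ineq_iid "measure_pmf M" I "\<lambda>i g. f (g i)" "\<lambda>g. f (g i\<^sub>0)" a b
    "measure_pmf.expectation M (\<lambda>g. f (g i\<^sub>0))"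
  proof unfold_locales
    show "prob_space.indep_vars (measure_pmf M) (\<lambda>_. borel) (\<lambda>i g. f (g i)) I"
      unfolding M_def
      by (intro prob_space.indep_vars_compose2[OF _ indep_vars_Pi_pmf])
         (auto simp: measure_pmf.prob_space_axioms assms(1))
    show "AE g in measure_pmf M. f (g i\<^sub>0) \<in> {a..b}"
      using bounded component[OF \<open>i\<^sub>0 \<in> I\<close>] by (auto simp: AE_measure_pmf_iff)
  qed (simp_all add: assms(1) distr_component \<open>i\<^sub>0 \<in> I\<close>)
  show ?thesis
    using Hoeffding_ineq_abs_ge'[OF \<open>\<epsilon> \<ge> 0\<close> \<open>a < b\<close> \<open>I \<noteq> {}\<close>]
    unfolding mean unfolding M_def by simp
qed

lemma gdist_walk_exists:
  assumes "graph_connected V E" "v \<in> V" "u \<in> V"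
  shows "walks_len V E v u (gdist V E v u) \<noteq> {}"
proof -
  obtain k where "walks_len V E v u k \<noteq> {}"
    using assms unfolding graph_connected_def by blast
  then show ?thesis unfolding gdist_def by (rule LeastI)
qed

lemma gdist_ge_1:
  assumes "graph_connected V E" "v \<in> V" "u \<in> V" "v \<noteq> u"
  shows "gdist V E v u \<ge> 1"
proof (rule ccontr)
  assume "\<not> gdist V E v u \<ge> 1"
  then have "gdist V E v u = 0" by simp
  then have "walks_len V E v u 0 \<noteq> {}"
    using gdist_walk_exists[OF assms(1-3)] by simp
  then obtain x where "[x] \<in> walks_len V E v u 0"
    unfolding walks_len_def by (auto simp: length_Suc_conv)
  then show False
    using \<open>v \<noteq> u\<close> unfolding walks_len_def by auto
qed

lemma gdist_le_diameter:
  assumes "finite V" "v \<in> V" "u \<in> V"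
  shows "gdist V E v u \<le> diameter V E"
proof -
  have "{gdist V E v u | v u. v \<in> V \<and> u \<in> V} = (\<lambda>(v, u). gdist V E v u) ` (V \<times> V)"
    by auto
  then have "finite {gdist V E v u | v u. v \<in> V \<and> u \<in> V}"
    using assms(1) by simp
  then show ?thesis
    unfolding diameter_def using assms(2,3) by (intro Max_ge) auto
qed

lemma diameter_ge_1:
  assumes "finite V" "card V \<ge> 2" "graph_connected V E"
  shows "diameter V E \<ge> 1"
proof -
  obtain v u where "v \<in> V" "u \<in> V" "v \<noteq> u"
    using assms(1,2) by (metis card_le_Suc0_iff_eq not_less_eq_eq numeral_2_eq_2)
  then show ?thesis
    using gdist_ge_1[OF assms(3)] gdist_le_diameter[OF assms(1)] by (meson le_trans)
qed

lemma beta_v_in_diameter_interval: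
  assumes "finite V" "card V \<ge> 2" "w \<in> V"
  shows "beta_v V E w \<in> {0..real (diameter V E)}"
proof -
  let ?D = "real (diameter V E)"
  have term_bound: "real (gdist V E w u) / real (nsp V E w u) \<le> ?D" if "u \<in> V" for u
  proof -
    have "real (gdist V E w u) / real (nsp V E w u) \<le> real (gdist V E w u)"
      by (cases "nsp V E w u = 0") (simp_all add: divide_le_eq mult_le_cancel_left1)
    also have "\<dots> \<le> ?D"
      using gdist_le_diameter[OF assms(1,3) that] by simp
    finally show ?thesis .
  qed
  have card_rest: "real (card (V - {w})) = real (card V) - 1"
    using assms by (simp add: of_nat_diff)
  let ?S = "\<Sum>u\<in>V - {w}. real (gdist V E w u) / real (nsp V E w u)"
  have "?S \<le> (real (card V) - 1) * ?D"
    using sum_mono[of "V - {w}" _ "\<lambda>_. ?D"] term_bound card_rest by auto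
  moreover have "0 \<le> ?S"
    by (intro sum_nonneg) simp
  moreover have "real (card V) - 1 > 0"
    using assms(2) by simp
  ultimately show ?thesis
    unfolding beta_v_def by (simp add: pos_divide_le_eq mult.commute)
qed

lemma expectation_beta_v_uniform:
  assumes "finite V" "V \<noteq> {}"
  shows "measure_pmf.expectation (pmf_of_set V) (beta_v V E) = adpl V E"
  using assms unfolding adpl_def beta_v_def
  by (simp add: integral_pmf_of_set sum_distrib_left[symmetric] field_simps)

theorem proposition2:
  fixes V :: "'a set" and E :: "'a \<Rightarrow> 'a \<Rightarrow> bool" and T :: nat and \<epsilon> :: real
  assumes "finite V" and "card V \<ge> 2"
    and "\<And>x y. E x y \<Longrightarrow> x \<in> V \<and> y \<in> V"
    and "\<And>x y. E x y \<Longrightarrow> E y x"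
    and "\<And>x. \<not> E x x"
    and "graph_connected V E"
    and "T \<ge> 1" and "\<epsilon> > 0"
  shows "measure_pmf.prob (Pi_pmf {..<T} undefined (\<lambda>_. pmf_of_set V))
           {vs. \<bar>adpl V E - (1 / real T) * (\<Sum>t<T. beta_v V E (vs t))\<bar> > \<epsilon>}
         \<le> 2 * exp (- 2 * real T * (\<epsilon> / real (diameter V E))\<^sup>2)"
proof -
  let ?M = "Pi_pmf {..<T} undefined (\<lambda>_. pmf_of_set V)"
  let ?D = "real (diameter V E)"
  have "V \<noteq> {}" using assms(2) by auto
  have "?D > 0"
    using diameter_ge_1[OF assms(1,2,6)] by simp
  moreover have "{..<T} \<noteq> {}" using assms(7) by (simp add: lessThan_empty_iff)
  ultimately have Hoeffding:
    "measure_pmf.prob ?M {vs. \<bar>(\<Sum>t<T. beta_v V E (vs t)) / real T - adpl V E\<bar> \<ge> \<epsilon>}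
     \<le> 2 * exp (- 2 * real T * \<epsilon>\<^sup>2 / ?D\<^sup>2)"
    using Hoeffding_Pi_pmf_iid_abs_ge[of "{..<T}" "pmf_of_set V" "beta_v V E" 0 ?D \<epsilon> undefined]
      beta_v_in_diameter_interval[OF assms(1,2)] assms(1,8) \<open>V \<noteq> {}\<close>
    by (simp add: expectation_beta_v_uniform)
  have "measure_pmf.prob ?M {vs. \<bar>adpl V E - (1 / real T) * (\<Sum>t<T. beta_v V E (vs t))\<bar> > \<epsilon>}
      \<le> measure_pmf.prob ?M {vs. \<bar>(\<Sum>t<T. beta_v V E (vs t)) / real T - adpl V E\<bar> \<ge> \<epsilon>}"
    by (intro measure_pmf.finite_measure_mono) (auto simp: abs_minus_commute)
  also note Hoeffding
  also have "2 * exp (- 2 * real T * \<epsilon>\<^sup>2 / ?D\<^sup>2) = 2 * exp (- 2 * real T * (\<epsilon> / ?D)\<^sup>2)"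
    by (simp add: power_divide)
  finally show ?thesis .
qed

end
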